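(* Let $r_1,\dots,r_N$ be rational numbers in arithmetic progression. Write $r_1=b/a$ and $d=r_2-r_1=v/u$ with $a,u$ positive integers, $b,v\in\mathbb{Z}$, $\gcd(a,b)=\gcd(u,v)=1$, and let $s=\operatorname{lcm}(a,u)$. Write $r_i=x_i/s$ with $x_i\in\mathbb{Z}$ for $1\le i\le N$. Let $0<\delta<1$ and set $m=\lceil 1/\delta\rceil$. If $s\ge\prod_{j=1}^{2m-1}j!$, then $$\big|\{\,i : \gcd(x_i,s)\le s^\delta\,\}\big|\ \ge\ \Big\lfloor \frac{N}{2m}\Big\rfloor.$$ *)

theory Defs
  imports Complex_Main
begin

end

theory Submission
  imports Defs
begin

(* Clearing denominators gives x_i = c + (i - 1) w with gcd (s, c, w) = 1, so any common
   divisor of gcd (x_i, s) and gcd (x_j, s) divides j - i. For K consecutive terms this bounds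
   the product of the gcds by their lcm times 0! 1! ... (K-1)!, hence by s * s. If all of them
   exceeded s^delta, the product would exceed s^(K delta) >= s^2 for K = 2 ceil (1/delta);
   so each of the N div K disjoint blocks of K consecutive indices contains an index i with
   gcd (x_i, s) <= s^delta. *)

lemma gcd_mult_dvd_mult_gcd:
  fixes a b c :: "'a :: semiring_gcd"
  shows "gcd (a * b) c dvd gcd a c * gcd b c"
proof -
  have "gcd (a * b) c dvd gcd (a * b) (a * c)"
    by (simp add: gcd_mono)
  then have "gcd (a * b) c dvd a * gcd b c"
    by (simp add: gcd_mult_left)
  moreover have "gcd (a * b) c dvd c * gcd b c"
    by simp
  ultimately have "gcd (a * b) c dvd gcd (a * gcd b c) (c * gcd b c)"
    by (rule gcd_greatest)
  then show ?thesis
    by (simp add: gcd_mult_right gcd.commute)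
qed

lemma gcd_prod_dvd_prod_gcd:
  fixes f :: "'b \<Rightarrow> 'a :: semiring_gcd"
  assumes "finite A"
  shows "gcd (\<Prod>k\<in>A. f k) c dvd (\<Prod>k\<in>A. gcd (f k) c)"
  using assms
proof (induction A rule: finite_induct)
  case (insert k A)
  have "gcd (f k * prod f A) c dvd gcd (f k) c * gcd (prod f A) c"
    by (rule gcd_mult_dvd_mult_gcd)
  also have "\<dots> dvd gcd (f k) c * (\<Prod>k\<in>A. gcd (f k) c)"
    using insert.IH by (rule mult_dvd_mono[OF dvd_refl])
  finally show ?case using insert.hyps by simp
qed simp

lemma coprime_lcm_div:
  fixes a b :: "'a :: semiring_gcd"
  assumes "a \<noteq> 0" "b \<noteq> 0"
  shows "coprime (lcm a b div a) (lcm a b div b)"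
proof (rule coprimeI)
  fix e assume "e dvd lcm a b div a" and "e dvd lcm a b div b"
  then obtain A' B' where A': "lcm a b div a = e * A'" and B': "lcm a b div b = e * B'"
    by (meson dvdE)
  have L_nz: "lcm a b \<noteq> 0" using assms by (simp add: lcm_eq_0_iff)
  have La: "lcm a b = e * (a * A')"
    using A' by (metis dvd_div_mult_self dvd_lcm1 mult.commute mult.left_commute)
  moreover have "lcm a b = e * (b * B')"
    using B' by (metis dvd_div_mult_self dvd_lcm2 mult.commute mult.left_commute)
  ultimately have "a * A' = b * B'" using L_nz by simp
  then have "lcm a b dvd a * A'" by (metis dvd_triv_left lcm_least)
  then have "e * (a * A') dvd 1 * (a * A')" using La by simp
  then show "is_unit e" using La L_nz by (subst (asm) dvd_times_right_cancel_iff) auto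
qed

lemma coprime_gcd_mult_mult:
  fixes a b u v A U :: "'a :: semiring_gcd"
  assumes "a * A = u * U" "coprime A U" "coprime a b" "coprime u v"
  shows "coprime (gcd (a * A) (b * A)) (v * U)"
proof -
  have "gcd (a * A) (b * A) = normalize A"
    using \<open>coprime a b\<close> by (simp add: gcd_mult_right gcd.commute)
  moreover have "A dvd u"
    using assms(1,2) by (metis coprime_dvd_mult_left_iff dvd_triv_right)
  then have "coprime A v"
    using dvd_refl \<open>coprime u v\<close> by (rule coprime_divisors)
  ultimately show ?thesis using \<open>coprime A U\<close> by simp
qed

lemma prod_le_Lcm_mult_prod_fact:
  fixes G :: "nat \<Rightarrow> int"
  assumes "\<And>k. k < K \<Longrightarrow> G k > 0"
    and "\<And>i j. i < j \<Longrightarrow> j < K \<Longrightarrow> gcd (G i) (G j) dvd int (j - i)"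
  shows "(\<Prod>k<K. G k) \<le> Lcm (G ` {..<K}) * (\<Prod>j<K. fact j)"
  using assms
proof (induction K)
  case (Suc K)
  let ?L = "Lcm (G ` {..<K})"
  have IH: "(\<Prod>k<K. G k) \<le> ?L * (\<Prod>j<K. fact j)"
    using Suc by simp
  have "gcd ?L (G K) dvd gcd (\<Prod>k<K. G k) (G K)"
    by (intro gcd_mono Lcm_least) auto
  also have "\<dots> dvd (\<Prod>k<K. gcd (G k) (G K))"
    by (rule gcd_prod_dvd_prod_gcd) simp
  also have "\<dots> dvd (\<Prod>k<K. int (K - k))"
    by (rule prod_dvd_prod) (use Suc.prems(2) in force)
  also have "\<dots> = fact K"
    by (simp add: fact_prod_rev atLeast0LessThan)
  finally have gcd_le: "gcd ?L (G K) \<le> fact K"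
    by (rule zdvd_imp_le) simp
  have "?L * G K = gcd ?L (G K) * lcm ?L (G K)"
    using Suc.prems(1)[of K] by (simp flip: prod_gcd_lcm_int)
  also have "\<dots> \<le> fact K * Lcm (G ` {..<Suc K})"
    using gcd_le by (simp add: lessThan_Suc lcm.commute mult_right_mono)
  finally have L_step: "?L * G K \<le> fact K * Lcm (G ` {..<Suc K})" .
  have "(\<Prod>k<Suc K. G k) \<le> (?L * (\<Prod>j<K. fact j)) * G K"
    using IH Suc.prems(1)[of K] by simp
  also have "\<dots> = (?L * G K) * (\<Prod>j<K. fact j)"
    by (simp add: mult_ac)
  also have "\<dots> \<le> (fact K * Lcm (G ` {..<Suc K})) * (\<Prod>j<K. fact j)"
    using L_step by (rule mult_right_mono) (simp add: prod_nonneg)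
  finally show ?case
    by (simp add: mult_ac)
qed simp

lemma gcd_gcd_progression_dvd_diff:
  fixes c w s :: int
  assumes "coprime (gcd s c) w" "i \<le> j"
  shows "gcd (gcd (c + int i * w) s) (gcd (c + int j * w) s) dvd int (j - i)"
proof -
  define h where "h = gcd (gcd (c + int i * w) s) (gcd (c + int j * w) s)"
  have h_s: "h dvd s" and h_i: "h dvd c + int i * w" and h_j: "h dvd c + int j * w"
    unfolding h_def by (meson dvd_trans gcd_dvd1 gcd_dvd2)+
  have "coprime h w"
  proof (rule coprimeI)
    fix d assume "d dvd h" "d dvd w"
    then have "d dvd (c + int i * w) - int i * w" using h_i by (meson dvd_diff dvd_mult dvd_trans)
    then have "d dvd gcd s c" using \<open>d dvd h\<close> h_s by (simp add: dvd_trans)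
    then show "is_unit d" using assms(1) \<open>d dvd w\<close> by (meson coprime_common_divisor)
  qed
  moreover have "h dvd int (j - i) * w"
    using dvd_diff[OF h_j h_i] assms(2) by (simp add: algebra_simps)
  ultimately show ?thesis
    unfolding h_def by (simp add: coprime_dvd_mult_left_iff)
qed

lemma prod_gcd_progression_le:
  fixes c w s :: int
  assumes "s > 0" "coprime (gcd s c) w"
  shows "(\<Prod>k<K. gcd (c + int (n + k) * w) s) \<le> s * (\<Prod>j<K. fact j)"
proof -
  define G where "G k = gcd (c + int (n + k) * w) s" for k
  have "(\<Prod>k<K. G k) \<le> Lcm (G ` {..<K}) * (\<Prod>j<K. fact j)"
  proof (rule prod_le_Lcm_mult_prod_fact)
    show "G k > 0" for k
      using \<open>s > 0\<close> by (simp add: G_def)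
    show "gcd (G i) (G j) dvd int (j - i)" if "i < j" for i j
      using gcd_gcd_progression_dvd_diff[OF assms(2), of "n + i" "n + j"] that
      by (simp add: G_def)
  qed
  also have "\<dots> \<le> s * (\<Prod>j<K. fact j)"
  proof (rule mult_right_mono)
    show "Lcm (G ` {..<K}) \<le> s"
      using \<open>s > 0\<close> by (intro zdvd_imp_le Lcm_least) (auto simp: G_def)
  qed (simp add: prod_nonneg)
  finally show ?thesis
    by (simp add: G_def)
qed

lemma ex_gcd_progression_le_powr:
  fixes c w s :: int and \<delta> :: real
  assumes "s > 0" "coprime (gcd s c) w"
    and fact_le: "(\<Prod>j<K. fact j) \<le> real_of_int s" and K_\<delta>: "2 \<le> real K * \<delta>"
  shows "\<exists>k<K. real_of_int (gcd (c + int (n + k) * w) s) \<le> real_of_int s powr \<delta>"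
proof (rule ccontr)
  define g where "g k = gcd (c + int (n + k) * w) s" for k
  assume "\<not> ?thesis"
  then have large: "real_of_int s powr \<delta> < real_of_int (g k)" if "k < K" for k
    using that unfolding g_def by (meson not_le)
  have g_pos: "g k > 0" for k
    using \<open>s > 0\<close> by (simp add: g_def)
  have "K > 0"
    using K_\<delta> by (intro gr0I) simp
  have "real_of_int s powr 2 \<le> real_of_int s powr (real K * \<delta>)"
    using K_\<delta> \<open>s > 0\<close> by (intro powr_mono) auto
  also have "\<dots> = (\<Prod>k<K. real_of_int s powr \<delta>)"
    using \<open>s > 0\<close> by (simp add: powr_power)
  also have "\<dots> < (\<Prod>k<K. real_of_int (g k))"
    using \<open>K > 0\<close> large g_pos by (intro prod_mono_strict[of 0]) (auto intro: less_imp_le)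
  also have "\<dots> = real_of_int (\<Prod>k<K. g k)"
    by (rule of_int_prod[symmetric])
  also have "\<dots> \<le> real_of_int (s * (\<Prod>j<K. fact j))"
    using prod_gcd_progression_le[OF assms(1,2), where K = K and n = n]
    unfolding g_def of_int_le_iff .
  also have "\<dots> \<le> real_of_int s * real_of_int s"
    using fact_le \<open>s > 0\<close> by (simp add: of_int_prod)
  finally show False
    using \<open>s > 0\<close> by (simp add: power2_eq_square)
qed

lemma div_le_card_if_blocks_hit:
  fixes P :: "nat \<Rightarrow> bool"
  assumes "\<And>t. Suc t * K \<le> N \<Longrightarrow> \<exists>k<K. P (t * K + 1 + k)"
  shows "N div K \<le> card {i \<in> {1..N}. P i}"
proof -
  let ?S = "{i \<in> {1..N}. P i}"
  let ?block = "\<lambda>i. (i - 1) div K"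
  have "{..<N div K} \<subseteq> ?block ` ?S"
  proof
    fix t assume "t \<in> {..<N div K}"
    then have "Suc t * K \<le> N div K * K"
      by (intro mult_right_mono) auto
    also have "\<dots> \<le> N"
      by simp
    finally have block_le: "Suc t * K \<le> N" .
    then obtain k where "k < K" "P (t * K + 1 + k)"
      using assms by blast
    moreover have "?block (t * K + 1 + k) = t"
      using \<open>k < K\<close> by simp
    moreover have "t * K + 1 + k \<le> N"
      using \<open>k < K\<close> block_le by simp
    ultimately show "t \<in> ?block ` ?S"
      by (intro image_eqI[of _ _ "t * K + 1 + k"]) auto
  qed
  then have "card {..<N div K} \<le> card (?block ` ?S)"
    by (intro card_mono finite_imageI) simp_all
  also have "\<dots> \<le> card ?S"
    by (intro card_image_le) simp
  finally show ?thesis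
    by simp
qed

lemma progression_numerator_eq:
  fixes a b u v A U x :: int
  assumes "a * A = u * U" "a * A \<noteq> 0"
    and "(of_int x / of_int (a * A) :: 'a :: field_char_0)
           = of_int b / of_int a + of_nat n * (of_int v / of_int u)"
  shows "x = b * A + int n * (v * U)"
proof -
  have nz: "(of_int a :: 'a) \<noteq> 0" "(of_int u :: 'a) \<noteq> 0" "(of_int (a * A) :: 'a) \<noteq> 0"
    using assms(1,2) by auto
  have "(of_int x :: 'a)
          = of_int (a * A) * (of_int b / of_int a + of_nat n * (of_int v / of_int u))"
    using assms(3) nz(3) by (simp add: divide_eq_eq)
  also have "\<dots> = of_int A * of_int b + of_nat n * of_int v * (of_int (u * U) / of_int u)"
    using nz(1) unfolding assms(1)[symmetric] by (simp add: algebra_simps)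
  also have "\<dots> = of_int (b * A + int n * (v * U))"
    using nz(2) by simp
  finally show ?thesis by (simp only: of_int_eq_iff)
qed

lemma progression_numerators_lcm:
  fixes a b u v :: int and x :: "nat \<Rightarrow> int"
  assumes "a > 0" "u > 0" "coprime a b" "coprime u v"
    and "\<And>i. i \<in> I \<Longrightarrow> (of_int (x i) / of_int (lcm a u) :: 'a :: field_char_0)
                          = of_int b / of_int a + of_nat (i - 1) * (of_int v / of_int u)"
  obtains c w where "coprime (gcd (lcm a u) c) w"
    and "\<And>i. i \<in> I \<Longrightarrow> x i = c + int (i - 1) * w"
proof
  define A where "A = lcm a u div a"
  define U where "U = lcm a u div u"
  have sA: "a * A = lcm a u" and sU: "a * A = u * U"
    by (simp_all add: A_def U_def)
  have "coprime A U"
    unfolding A_def U_def using assms(1,2) by (intro coprime_lcm_div) auto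
  then show "coprime (gcd (lcm a u) (b * A)) (v * U)"
    using coprime_gcd_mult_mult[OF sU _ assms(3,4)] by (simp add: sA)
  show "x i = b * A + int (i - 1) * (v * U)" if "i \<in> I" for i
    using progression_numerator_eq[OF sU] assms(5)[OF that] assms(1,2)
    by (simp add: sA lcm_eq_0_iff)
qed

lemma div_le_card_small_gcd_progression:
  fixes c w s :: int and x :: "nat \<Rightarrow> int" and \<delta> :: real
  assumes "s > 0" "coprime (gcd s c) w"
    and x: "\<And>i. i \<in> {1..N} \<Longrightarrow> x i = c + int (i - 1) * w"
    and "(\<Prod>j<K. fact j) \<le> real_of_int s" "2 \<le> real K * \<delta>"
  shows "N div K \<le> card {i \<in> {1..N}. real_of_int (gcd (x i) s) \<le> real_of_int s powr \<delta>}"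
proof (rule div_le_card_if_blocks_hit)
  fix t assume block: "Suc t * K \<le> N"
  obtain k where "k < K"
    and "real_of_int (gcd (c + int (t * K + k) * w) s) \<le> real_of_int s powr \<delta>"
    using ex_gcd_progression_le_powr[OF assms(1,2,4,5), of "t * K"] by blast
  moreover have "x (t * K + 1 + k) = c + int (t * K + k) * w"
    using x[of "t * K + 1 + k"] \<open>k < K\<close> block by simp
  ultimately show "\<exists>k<K. real_of_int (gcd (x (t * K + 1 + k)) s) \<le> real_of_int s powr \<delta>"
    by auto
qed

lemma one_le_ceiling_inverse_mult:
  fixes \<delta> :: real
  assumes "\<delta> > 0"
  shows "1 \<le> real_of_int \<lceil>1 / \<delta>\<rceil> * \<delta>"
proof -
  have "1 = 1 / \<delta> * \<delta>"
    using assms by simp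
  also have "\<dots> \<le> real_of_int \<lceil>1 / \<delta>\<rceil> * \<delta>"
    using assms by (intro mult_right_mono) auto
  finally show ?thesis .
qed

theorem lemma5p1:
  fixes N :: nat and r :: "nat \<Rightarrow> rat"
    and a b u v :: int and x :: "nat \<Rightarrow> int" and \<delta> :: real
  assumes AP: "\<forall>i\<in>{1..N}. r i = r 1 + of_nat (i - 1) * (r 2 - r 1)"
    and a_pos: "a > 0" and r1: "r 1 = of_int b / of_int a" and cop_ab: "gcd a b = 1"
    and u_pos: "u > 0" and d: "r 2 - r 1 = of_int v / of_int u" and cop_uv: "gcd u v = 1"
    and x: "\<forall>i\<in>{1..N}. r i = of_int (x i) / of_int (lcm a u)"
    and \<delta>: "0 < \<delta>" "\<delta> < 1"
    and big: "real_of_int (lcm a u) \<ge> (\<Prod>j = 1..2 * nat \<lceil>1 / \<delta>\<rceil> - 1. fact j)"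
  shows "card {i \<in> {1..N}. real_of_int (gcd (x i) (lcm a u)) \<le> real_of_int (lcm a u) powr \<delta>}
           \<ge> N div (2 * nat \<lceil>1 / \<delta>\<rceil>)"
proof -
  define K where "K = 2 * nat \<lceil>1 / \<delta>\<rceil>"
  have "(of_int (x i) / of_int (lcm a u) :: rat)
          = of_int b / of_int a + of_nat (i - 1) * (of_int v / of_int u)"
    if "i \<in> {1..N}" for i
    using AP x that by (metis d r1)
  then obtain c w where cop: "coprime (gcd (lcm a u) c) w"
    and x_eq: "\<And>i. i \<in> {1..N} \<Longrightarrow> x i = c + int (i - 1) * w"
    using progression_numerators_lcm[OF a_pos u_pos] cop_ab cop_uv by (metis coprime_iff_gcd_eq_1)
  have "K > 0"
    using \<delta> by (simp add: K_def)
  then have "{..<K} = insert 0 {1..K - 1}"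
    by auto
  then have fact_le: "(\<Prod>j<K. fact j) \<le> real_of_int (lcm a u)"
    using big by (simp add: K_def)
  have "2 \<le> real K * \<delta>"
    using one_le_ceiling_inverse_mult[OF \<delta>(1)] \<delta> by (simp add: K_def)
  then show ?thesis
    using div_le_card_small_gcd_progression[OF _ cop x_eq fact_le] a_pos u_pos
    by (simp add: K_def lcm_pos_int)
qed

end
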